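(* Let $E$ be a separable real Banach space and $g$ a linear isometric automorphism of $E$ with $g\neq\mathrm{id}$. Then there exist $x\in E$ and $\lambda\in E^*$ such that $\lambda$ norms $x$ but does not norm $gx$, i.e., $\|\lambda\|=\|x\|=1$, $\lambda(x)=1$ and $\lambda(gx)<1$. *)

theory Defs
  imports "HOL-Analysis.Analysis"
begin

end

theory Submission
  imports Defs
begin

text \<open>If \<open>g x \<noteq> x\<close>, take a Hahn--Banach functional \<open>l\<close> of norm one norming \<open>y = x - g x\<close>.
  Were every normed pair \<open>(v, l)\<close> also normed by \<open>g v\<close>, then \<open>l\<close> would norm the whole orbit
  \<open>g\<^sup>k y\<close>, so \<open>l (\<Sum>k<N. g\<^sup>k y) = N \<parallel>y\<parallel>\<close>. But this sum telescopes to \<open>x - g\<^sup>N x\<close>, whose norm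
  is at most \<open>2 \<parallel>x\<parallel>\<close>.\<close>

definition sublinear :: "('a::real_vector \<Rightarrow> real) \<Rightarrow> bool" where
  "sublinear q \<longleftrightarrow> (\<forall>x y. q (x + y) \<le> q x + q y) \<and> (\<forall>c x. 0 \<le> c \<longrightarrow> q (c *\<^sub>R x) = c * q x)"

lemma sublinear_add: "sublinear q \<Longrightarrow> q (x + y) \<le> q x + q y"
  by (simp add: sublinear_def)

lemma sublinear_scaleR: "sublinear q \<Longrightarrow> 0 \<le> c \<Longrightarrow> q (c *\<^sub>R x) = c * q x"
  by (simp add: sublinear_def)

lemma sublinear_zero: "sublinear q \<Longrightarrow> q 0 = 0"
  using sublinear_scaleR[of q 0 0] by simp

lemma sublinearI:
  assumes "\<And>x y. q (x + y) \<le> q x + q y" "q 0 = 0" "\<And>c x. 0 < c \<Longrightarrow> q (c *\<^sub>R x) = c * q x"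
  shows "sublinear q"
  unfolding sublinear_def using assms by (metis order_less_le mult_zero_left scale_zero_left)

lemma sublinear_norm: "sublinear norm"
  by (simp add: sublinear_def norm_triangle_ineq)

lemma sublinear_dominated_lower_bound:
  assumes "sublinear p" "\<And>x. q x \<le> p x" "sublinear q"
  shows "- p (- x) \<le> q x"
  using sublinear_add[OF assms(3), of x "- x"] sublinear_zero[OF assms(3)] assms(2)[of "- x"]
  by simp

lemma bdd_below_dominated_sublinear:
  assumes "sublinear p" "\<And>q. q \<in> C \<Longrightarrow> sublinear q \<and> (\<forall>x. q x \<le> p x)"
  shows "bdd_below ((\<lambda>q. q x) ` C)"
proof (rule bdd_belowI[where m = "- p (- x)"])
  show "- p (- x) \<le> y" if "y \<in> (\<lambda>q. q x) ` C" for y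
    using that assms sublinear_dominated_lower_bound[OF assms(1)] by auto
qed

text \<open>For fixed \<open>q\<close> and \<open>y\<close>, the functional \<open>lower_along q y\<close> is again sublinear and below \<open>q\<close>;
  it coincides with \<open>q\<close> for every \<open>y\<close> only if \<open>q\<close> is linear. Hence pointwise minimal sublinear
  functionals are linear, which is the core of the Zorn-lemma proof of Hahn--Banach.\<close>

definition lower_along :: "('a::real_vector \<Rightarrow> real) \<Rightarrow> 'a \<Rightarrow> 'a \<Rightarrow> real" where
  "lower_along q y x = (INF t\<in>{0..}. q (x + t *\<^sub>R y) - t * q y)"

lemma lower_along_term_lower_bound:
  assumes "sublinear q" "0 \<le> t"
  shows "- q (- x) \<le> q (x + t *\<^sub>R y) - t * q y"
proof -
  have "q (t *\<^sub>R y) \<le> q (x + t *\<^sub>R y) + q (- x)"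
    using sublinear_add[OF assms(1), of "x + t *\<^sub>R y" "- x"] by simp
  then show ?thesis using sublinear_scaleR[OF assms] by simp
qed

lemma lower_along_le_term:
  assumes "sublinear q" "0 \<le> t"
  shows "lower_along q y x \<le> q (x + t *\<^sub>R y) - t * q y"
  unfolding lower_along_def
proof (rule cInf_lower)
  show "bdd_below ((\<lambda>t. q (x + t *\<^sub>R y) - t * q y) ` {0..})"
    by (rule bdd_belowI[where m = "- q (- x)"]) (auto intro: lower_along_term_lower_bound[OF assms(1)])
qed (use assms(2) in auto)

lemma lower_along_le: "sublinear q \<Longrightarrow> lower_along q y x \<le> q x"
  using lower_along_le_term[of q 0] by simp

lemma lower_along_greatest:
  "(\<And>t. 0 \<le> t \<Longrightarrow> z \<le> q (x + t *\<^sub>R y) - t * q y) \<Longrightarrow> z \<le> lower_along q y x"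
  unfolding lower_along_def by (rule cInf_greatest) auto

lemma lower_along_zero:
  assumes "sublinear q"
  shows "lower_along q y 0 = 0"
proof (rule antisym)
  show "lower_along q y 0 \<le> 0"
    using lower_along_le[OF assms, of y 0] sublinear_zero[OF assms] by simp
  show "0 \<le> lower_along q y 0"
    using lower_along_greatest[OF lower_along_term_lower_bound[OF assms]] sublinear_zero[OF assms]
    by (metis neg_0_equal_iff_equal)
qed

lemma lower_along_add:
  assumes q: "sublinear q"
  shows "lower_along q y (x1 + x2) \<le> lower_along q y x1 + lower_along q y x2"
proof -
  let ?L = "lower_along q y"
  have "?L (x1 + x2) - (q (x2 + t *\<^sub>R y) - t * q y) \<le> q (x1 + s *\<^sub>R y) - s * q y"
    if "0 \<le> s" "0 \<le> t" for s t
  proof -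
    have "?L (x1 + x2) \<le> q (x1 + x2 + (s + t) *\<^sub>R y) - (s + t) * q y"
      using lower_along_le_term[OF q, of "s + t"] that by simp
    also have "q (x1 + x2 + (s + t) *\<^sub>R y) \<le> q (x1 + s *\<^sub>R y) + q (x2 + t *\<^sub>R y)"
      using sublinear_add[OF q, of "x1 + s *\<^sub>R y" "x2 + t *\<^sub>R y"] by (simp add: algebra_simps)
    finally show ?thesis by (simp add: algebra_simps)
  qed
  then have "?L (x1 + x2) - (q (x2 + t *\<^sub>R y) - t * q y) \<le> ?L x1" if "0 \<le> t" for t
    using that by (intro lower_along_greatest) auto
  then have "?L (x1 + x2) - ?L x1 \<le> ?L x2"
    by (intro lower_along_greatest) (auto simp: algebra_simps)
  then show ?thesis by simp
qed

lemma lower_along_scaleR: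
  assumes q: "sublinear q" and c: "0 < c"
  shows "lower_along q y (c *\<^sub>R x) = c * lower_along q y x"
proof (rule antisym)
  have "lower_along q y (c *\<^sub>R x) / c \<le> lower_along q y x"
  proof (rule lower_along_greatest)
    fix s :: real assume s: "0 \<le> s"
    have "lower_along q y (c *\<^sub>R x) \<le> q (c *\<^sub>R x + (c * s) *\<^sub>R y) - (c * s) * q y"
      using lower_along_le_term[OF q, of "c * s"] s c by simp
    also have "q (c *\<^sub>R x + (c * s) *\<^sub>R y) = c * q (x + s *\<^sub>R y)"
      using sublinear_scaleR[OF q, of c "x + s *\<^sub>R y"] c by (simp add: algebra_simps)
    finally show "lower_along q y (c *\<^sub>R x) / c \<le> q (x + s *\<^sub>R y) - s * q y"
      using c by (simp add: field_simps)
  qed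
  then show "lower_along q y (c *\<^sub>R x) \<le> c * lower_along q y x"
    using c by (simp add: field_simps)
next
  show "c * lower_along q y x \<le> lower_along q y (c *\<^sub>R x)"
  proof (rule lower_along_greatest)
    fix t :: real assume t: "0 \<le> t"
    have "lower_along q y x \<le> q (x + (t / c) *\<^sub>R y) - (t / c) * q y"
      using lower_along_le_term[OF q, of "t / c"] t c by simp
    moreover have "c * q (x + (t / c) *\<^sub>R y) = q (c *\<^sub>R x + t *\<^sub>R y)"
      using sublinear_scaleR[OF q, of c "x + (t / c) *\<^sub>R y"] c by (simp add: algebra_simps)
    ultimately show "c * lower_along q y x \<le> q (c *\<^sub>R x + t *\<^sub>R y) - t * q y"
      using c by (simp add: field_simps)
  qed
qed

lemma sublinear_lower_along: "sublinear q \<Longrightarrow> sublinear (lower_along q y)"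
  by (rule sublinearI) (simp_all add: lower_along_add lower_along_zero lower_along_scaleR)

lemma linear_if_lower_along_eq:
  assumes q: "sublinear q" and eq: "\<And>y. lower_along q y = q"
  shows "linear q"
proof -
  have superadd: "q x + q y \<le> q (x + y)" for x y
    using lower_along_le_term[OF q, of 1 y x] eq[of y] by simp
  have add: "q (x + y) = q x + q y" for x y
    using superadd[of x y] sublinear_add[OF q, of x y] by simp
  have neg: "q (- x) = - q x" for x
    using add[of x "- x"] sublinear_zero[OF q] by simp
  show ?thesis
  proof (rule linearI)
    show "q (r *\<^sub>R x) = r *\<^sub>R q x" for r x
    proof (cases "0 \<le> r")
      case True then show ?thesis using sublinear_scaleR[OF q] by simp
    next
      case False
      then show ?thesis using neg[of "(- r) *\<^sub>R x"] sublinear_scaleR[OF q, of "- r" x] by simp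
    qed
  qed (rule add)
qed

lemma INF_positively_homogeneous:
  fixes C :: "('a::real_vector \<Rightarrow> real) set"
  assumes "C \<noteq> {}" "\<And>x. bdd_below ((\<lambda>q. q x) ` C)"
    and hom: "\<And>q. q \<in> C \<Longrightarrow> q (c *\<^sub>R x) = c * q x" and c: "0 < c"
  shows "(INF q\<in>C. q (c *\<^sub>R x)) = c * (INF q\<in>C. q x)"
proof (rule antisym)
  have "(INF q\<in>C. q (c *\<^sub>R x)) / c \<le> (INF q\<in>C. q x)"
  proof (rule cINF_greatest[OF \<open>C \<noteq> {}\<close>])
    fix q assume "q \<in> C"
    then have "(INF q\<in>C. q (c *\<^sub>R x)) \<le> c * q x"
      using cINF_lower[OF assms(2)] hom by metis
    then show "(INF q\<in>C. q (c *\<^sub>R x)) / c \<le> q x" using c by (simp add: field_simps)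
  qed
  then show "(INF q\<in>C. q (c *\<^sub>R x)) \<le> c * (INF q\<in>C. q x)" using c by (simp add: field_simps)
  show "c * (INF q\<in>C. q x) \<le> (INF q\<in>C. q (c *\<^sub>R x))"
  proof (rule cINF_greatest[OF \<open>C \<noteq> {}\<close>])
    fix q assume "q \<in> C"
    then show "c * (INF q\<in>C. q x) \<le> q (c *\<^sub>R x)"
      using cINF_lower[OF assms(2), of q x] hom[of q] c by (simp add: mult_left_mono)
  qed
qed

lemma sublinear_INF_chain:
  fixes C :: "('a::real_vector \<Rightarrow> real) set"
  assumes "C \<noteq> {}" and p: "sublinear p"
    and sub: "\<And>q. q \<in> C \<Longrightarrow> sublinear q \<and> (\<forall>x. q x \<le> p x)"
    and chain: "\<And>q1 q2. q1 \<in> C \<Longrightarrow> q2 \<in> C \<Longrightarrow> (\<forall>x. q1 x \<le> q2 x) \<or> (\<forall>x. q2 x \<le> q1 x)"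
  shows "sublinear (\<lambda>x. INF q\<in>C. q x)"
proof (rule sublinearI)
  define m where "m x = (INF q\<in>C. q x)" for x
  note bdd = bdd_below_dominated_sublinear[OF p sub]
  have le: "m x \<le> q x" if "q \<in> C" for q x
    unfolding m_def using cINF_lower[OF bdd that] .
  have greatest: "z \<le> m x" if "\<And>q. q \<in> C \<Longrightarrow> z \<le> q x" for z x
    unfolding m_def by (rule cINF_greatest) (use \<open>C \<noteq> {}\<close> that in auto)
  show "m (x + y) \<le> m x + m y" for x y
  proof -
    have "m (x + y) \<le> q1 x + q2 y" if q12: "q1 \<in> C" "q2 \<in> C" for q1 q2
    proof -
      obtain q where q: "q \<in> C" "q x \<le> q1 x" "q y \<le> q2 y"
        using chain[OF q12] q12 by blast
      have "m (x + y) \<le> q x + q y"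
        using le[OF q(1)] sublinear_add sub[OF q(1)] by (meson order_trans)
      with q show ?thesis by simp
    qed
    then have "m (x + y) - q2 y \<le> m x" if "q2 \<in> C" for q2
      using that by (intro greatest) force
    then have "m (x + y) - m x \<le> m y"
      by (intro greatest) force
    then show ?thesis by simp
  qed
  obtain q0 where q0: "q0 \<in> C" using \<open>C \<noteq> {}\<close> by blast
  show "m 0 = 0"
  proof (rule antisym)
    show "m 0 \<le> 0" using le[OF q0, of 0] sublinear_zero[of q0] sub[OF q0] by simp
    show "0 \<le> m 0" using sub by (intro greatest) (simp add: sublinear_zero)
  qed
  show "m (c *\<^sub>R x) = c * m x" if "0 < c" for c x
    unfolding m_def using that sub sublinear_scaleR[of _ c]
    by (intro INF_positively_homogeneous[OF \<open>C \<noteq> {}\<close> bdd]) (auto simp: less_imp_le)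
qed

text \<open>Condition \<open>q (- u) \<le> - p u\<close> is preserved under shrinking \<open>q\<close> and forces \<open>q u = p u\<close> once
  \<open>q\<close> is linear.\<close>

definition sublinear_minorants :: "('a::real_vector \<Rightarrow> real) \<Rightarrow> 'a \<Rightarrow> ('a \<Rightarrow> real) set" where
  "sublinear_minorants p u = {q. sublinear q \<and> (\<forall>x. q x \<le> p x) \<and> q (- u) \<le> - p u}"

lemma lower_along_in_sublinear_minorants:
  assumes "q \<in> sublinear_minorants p u"
  shows "lower_along q y \<in> sublinear_minorants p u"
proof -
  have q: "sublinear q" "\<And>x. q x \<le> p x" "q (- u) \<le> - p u"
    using assms unfolding sublinear_minorants_def by auto
  have "lower_along q y x \<le> p x" for x
    using lower_along_le[OF q(1), of y x] q(2)[of x] by linarith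
  moreover have "lower_along q y (- u) \<le> - p u"
    using lower_along_le[OF q(1), of y "- u"] q(3) by linarith
  ultimately show ?thesis
    unfolding sublinear_minorants_def using sublinear_lower_along[OF q(1)] by blast
qed

lemma INF_chain_in_sublinear_minorants:
  assumes "C \<noteq> {}" "C \<subseteq> sublinear_minorants p u" "sublinear p"
    and chain: "\<And>q1 q2. q1 \<in> C \<Longrightarrow> q2 \<in> C \<Longrightarrow> (\<forall>x. q1 x \<le> q2 x) \<or> (\<forall>x. q2 x \<le> q1 x)"
  shows "(\<lambda>x. INF q\<in>C. q x) \<in> sublinear_minorants p u"
proof -
  have sub: "sublinear q \<and> (\<forall>x. q x \<le> p x)" if "q \<in> C" for q
    using assms(2) that unfolding sublinear_minorants_def by auto
  obtain q0 where q0: "q0 \<in> C" using assms(1) by blast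
  have q0_le: "q0 x \<le> p x" for x
    using q0 assms(2) unfolding sublinear_minorants_def by auto
  have q0_u: "q0 (- u) \<le> - p u"
    using q0 assms(2) unfolding sublinear_minorants_def by auto
  have INF_le: "(INF q\<in>C. q x) \<le> q0 x" for x
    by (rule cINF_lower[OF bdd_below_dominated_sublinear[OF assms(3) sub] q0])
  have "(INF q\<in>C. q x) \<le> p x" "(INF q\<in>C. q (- u)) \<le> - p u" for x
    using INF_le[of x] INF_le[of "- u"] q0_le[of x] q0_u by linarith+
  with sublinear_INF_chain[OF assms(1,3) sub chain] show ?thesis
    unfolding sublinear_minorants_def by blast
qed

theorem sublinear_dominated_linear_exists:
  fixes p :: "'a::real_vector \<Rightarrow> real"
  assumes p: "sublinear p"
  shows "\<exists>l. linear l \<and> (\<forall>x. l x \<le> p x) \<and> l u = p u"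
proof -
  define A where "A = sublinear_minorants p u"
  define below where "below a b \<longleftrightarrow> (\<forall>x. b x \<le> a x)" for a b :: "'a \<Rightarrow> real"
  have start: "lower_along p u \<in> A"
    using lower_along_le_term[OF p, of 1 u "- u"] sublinear_zero[OF p]
      sublinear_lower_along[OF p] lower_along_le[OF p]
    unfolding A_def sublinear_minorants_def by simp
  have po: "partial_order_on A (relation_of below A)"
    unfolding partial_order_on_def preorder_on_def refl_on_def trans_def antisym_def
      relation_of_def below_def
    by (auto intro: order_trans antisym simp: fun_eq_iff)
  have chain_bounded: "\<exists>m\<in>A. \<forall>a\<in>C. below a m" if C: "C \<in> Chains (relation_of below A)" for C
  proof (cases "C = {}")
    case True then show ?thesis using start by blast
  next
    case False
    have CA: "C \<subseteq> A" using C unfolding Chains_def relation_of_def by auto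
    have chain: "(\<forall>x. q1 x \<le> q2 x) \<or> (\<forall>x. q2 x \<le> q1 x)" if "q1 \<in> C" "q2 \<in> C" for q1 q2
      using C that unfolding Chains_def relation_of_def below_def by auto
    have sub: "sublinear q \<and> (\<forall>x. q x \<le> p x)" if "q \<in> C" for q
      using CA that unfolding A_def sublinear_minorants_def by auto
    have "(\<lambda>x. INF q\<in>C. q x) \<in> A"
      using INF_chain_in_sublinear_minorants[OF False CA[unfolded A_def] p chain]
      unfolding A_def .
    moreover have "below a (\<lambda>x. INF q\<in>C. q x)" if "a \<in> C" for a
      unfolding below_def using cINF_lower[OF bdd_below_dominated_sublinear[OF p sub] that] by blast
    ultimately show ?thesis by blast
  qed
  obtain q where qA: "q \<in> A" and minimal: "\<And>a. a \<in> A \<Longrightarrow> below q a \<Longrightarrow> a = q"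
    using predicate_Zorn[OF po chain_bounded] by blast
  have q: "sublinear q" using qA unfolding A_def sublinear_minorants_def by simp
  have "lower_along q y = q" for y
  proof (rule minimal)
    show "lower_along q y \<in> A"
      using qA lower_along_in_sublinear_minorants unfolding A_def by blast
    show "below q (lower_along q y)"
      unfolding below_def using lower_along_le[OF q] by simp
  qed
  then have lin: "linear q" by (rule linear_if_lower_along_eq[OF q])
  have "p u \<le> q u" "q u \<le> p u"
    using qA linear_neg[OF lin, of u] unfolding A_def sublinear_minorants_def by auto
  with lin qA show ?thesis unfolding A_def sublinear_minorants_def by (intro exI[of _ q]) auto
qed

lemma norming_functional_exists:
  fixes u :: "'a::real_normed_vector"
  assumes "u \<noteq> 0"
  shows "\<exists>l. bounded_linear l \<and> onorm l = 1 \<and> (\<forall>x. l x \<le> norm x) \<and> l u = norm u"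
proof -
  obtain l where lin: "linear l" and le: "\<And>x. l x \<le> norm x" and lu: "l u = norm u"
    using sublinear_dominated_linear_exists[OF sublinear_norm] by blast
  have abs_le: "\<bar>l x\<bar> \<le> norm x" for x
    using le[of x] le[of "- x"] linear_neg[OF lin, of x] by auto
  have bl: "bounded_linear l"
    using lin abs_le by (auto simp: bounded_linear_def bounded_linear_axioms_def intro!: exI[of _ 1])
  have "onorm l = 1"
  proof (rule antisym)
    show "onorm l \<le> 1" by (rule onorm_bound) (use abs_le in simp_all)
    show "1 \<le> onorm l" using onorm[OF bl, of u] lu assms by simp
  qed
  with bl le lu show ?thesis by blast
qed

lemma sum_funpow_diff:
  assumes "linear g"
  shows "(\<Sum>k<N. (g ^^ k) (x - g x)) = x - (g ^^ N) x"
proof -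
  have "(g ^^ k) (x - g x) = (g ^^ k) x - (g ^^ Suc k) x" for k
  proof -
    have "linear (g ^^ k)"
      using assms by (induction k) (simp_all add: linear_compose linear_iff)
    then show ?thesis by (simp add: linear_diff funpow_swap1)
  qed
  then have "(\<Sum>k<N. (g ^^ k) (x - g x)) = (\<Sum>k<N. (g ^^ k) x - (g ^^ Suc k) x)"
    by (simp only:)
  also have "\<dots> = x - (g ^^ N) x"
    using sum_lessThan_telescope'[of "\<lambda>k. (g ^^ k) x" N] by simp
  finally show ?thesis .
qed

lemma isometry_orbit_functional_nonpos:
  fixes g :: "'a::real_normed_vector \<Rightarrow> 'a"
  assumes g: "linear g" "\<And>x. norm (g x) = norm x"
    and l: "linear l" "\<And>z. l z \<le> norm z"
    and orbit: "\<And>k. c \<le> l ((g ^^ k) (x - g x))"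
  shows "c \<le> 0"
proof (rule ccontr)
  assume "\<not> c \<le> 0"
  then obtain N where N: "2 * norm x < real N * c"
    using ex_less_of_nat_mult[of c] by auto
  have "real N * c \<le> (\<Sum>k<N. l ((g ^^ k) (x - g x)))"
    using sum_mono[of "{..<N}" "\<lambda>_. c", OF orbit] by simp
  also have "\<dots> = l (x - (g ^^ N) x)"
    by (simp add: linear_sum[OF l(1), symmetric] sum_funpow_diff[OF g(1)])
  also have "\<dots> \<le> norm x + norm ((g ^^ N) x)"
    using l(2) norm_triangle_ineq4 order_trans by blast
  also have "norm ((g ^^ N) x) = norm x"
    by (induction N) (simp_all add: g(2))
  finally show False using N by simp
qed

theorem lemma4p4:
  fixes g :: "'a::banach \<Rightarrow> 'a"
  assumes separable: "\<exists>D::'a set. countable D \<and> closure D = UNIV"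
    and lin: "linear g"
    and bij: "bij g"
    and isom: "\<And>x. norm (g x) = norm x"
    and nid: "g \<noteq> id"
  shows "\<exists>x::'a. \<exists>l::'a \<Rightarrow> real.
           bounded_linear l \<and> onorm l = 1 \<and> norm x = 1 \<and>
           l x = 1 \<and> l (g x) < 1"
proof (rule ccontr)
  assume no_witness: "\<not> ?thesis"
  obtain x where "g x \<noteq> x" using nid by (auto simp: fun_eq_iff)
  then have y: "x - g x \<noteq> 0" by simp
  then obtain l where bl: "bounded_linear l" and on: "onorm l = 1"
    and le: "\<And>z. l z \<le> norm z" and ly: "l (x - g x) = norm (x - g x)"
    using norming_functional_exists by blast
  have l: "linear l" using bl by (rule bounded_linear.linear)
  have invariant: "l (g v) = norm (g v)" if "l v = norm v" for v
  proof (cases "v = 0")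
    case False
    define e where "e = v /\<^sub>R norm v"
    have "norm e = 1" "l e = 1"
      using that False by (simp_all add: e_def linear_scale[OF l])
    then have "1 \<le> l (g e)" using no_witness bl on by force
    also have "l (g e) = l (g v) / norm v"
      by (simp add: e_def linear_scale[OF lin] linear_scale[OF l] divide_inverse mult.commute)
    finally show ?thesis
      using le[of "g v"] isom[of v] False by (simp add: field_simps)
  qed (simp add: linear_0[OF lin] linear_0[OF l])
  have "l ((g ^^ k) (x - g x)) = norm ((g ^^ k) (x - g x))" for k
    by (induction k) (simp_all add: ly invariant)
  moreover have "norm ((g ^^ k) (x - g x)) = norm (x - g x)" for k
    by (induction k) (simp_all add: isom)
  ultimately have "norm (x - g x) \<le> 0"
    by (intro isometry_orbit_functional_nonpos[OF lin isom l le, where x = x]) simp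
  with y show False by simp
qed

end
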